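(* Let $p,q$ be distinct primes, $m>1$ an integer, and $S=\{p^kq^l: 0\le k,l\le m-1\}$ (so $|S|=m^2$). Then $i_-([S])=2m-2$ and $i_+([S])=(m-1)^2+1$; in particular $i_+([S])/|S|\to 1$ as $m\to\infty$.
   Context: The LCM matrix $[S]$ of $S=\{x_1,\dots,x_n\}$ has $(i,j)$ entry $\mathrm{lcm}(x_i,x_j)$; $i_+(M)$ and $i_-(M)$ denote the numbers of positive and negative eigenvalues (with multiplicity) of a real symmetric matrix $M$. *)

theory Defs
  imports Main "HOL-Computational_Algebra.Polynomial" "Jordan_Normal_Form.Char_Poly"
begin

text \<open>LCM matrix of a finite set S of positive integers, rows/columns indexed by
  the elements of S in increasing order (inertia does not depend on the ordering).\<close>
definition lcm_matrix :: "nat set \<Rightarrow> real mat" where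
  "lcm_matrix S = (let xs = sorted_list_of_set S in
     mat (length xs) (length xs) (\<lambda>(i,j). real (lcm (xs ! i) (xs ! j))))"

text \<open>For real symmetric
  matrices the characteristic polynomial splits over the reals.\<close>
definition pos_inertia :: "real mat \<Rightarrow> nat" where
  "pos_inertia M = size (filter_mset (\<lambda>x. x > 0) (proots (char_poly M)))"

definition neg_inertia :: "real mat \<Rightarrow> nat" where
  "neg_inertia M = size (filter_mset (\<lambda>x. x < 0) (proots (char_poly M)))"

definition pq_set :: "nat \<Rightarrow> nat \<Rightarrow> nat \<Rightarrow> nat set" where
  "pq_set p q m = {p ^ k * q ^ l | k l. k \<le> m - 1 \<and> l \<le> m - 1}"

end

theory Submission
  imports Defs "HOL-Real_Asymp.Real_Asymp"
begin

text \<open>Index \<open>S\<close> by exponent pairs \<open>(k, l)\<close>. Since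
  \<open>lcm (p ^ k * q ^ l) (p ^ k' * q ^ l') = p ^ max k k' * q ^ max l l'\<close>, the LCM matrix is the
  Kronecker product \<open>A\<^sub>p \<otimes> A\<^sub>q\<close> of the \<open>m \<times> m\<close> matrices \<open>A\<^sub>x = (x ^ max k k')\<close>. The basis
  \<open>e\<^sub>m\<^sub>-\<^sub>1, e\<^sub>1 - e\<^sub>0, \<dots>, e\<^sub>m\<^sub>-\<^sub>1 - e\<^sub>m\<^sub>-\<^sub>2\<close> makes \<open>A\<^sub>x\<close> congruent to the diagonal matrix with entries
  \<open>x ^ (m - 1)\<close> and \<open>x ^ (a - 1) - x ^ a\<close> for \<open>1 \<le> a < m\<close>, of signs \<open>+, -, \<dots>, -\<close> when \<open>x > 1\<close>.
  Hence \<open>[S]\<close> is congruent to a diagonal matrix with \<open>(m - 1)\<^sup>2 + 1\<close> positive and \<open>2 (m - 1)\<close>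
  negative entries, and Sylvester's law of inertia, a consequence of the spectral theorem for real
  symmetric matrices, turns these sign counts into eigenvalue counts.\<close>

section \<open>The spectral theorem for real symmetric matrices\<close>

lemma real_symmetric_eigenvalue_real:
  fixes H :: "real mat"
  assumes H: "H \<in> carrier_mat n n" and sym: "transpose_mat H = H"
    and ev: "eigenvalue (map_mat complex_of_real H) a"
  shows "a \<in> \<real>"
proof -
  let ?A = "map_mat complex_of_real H"
  have A: "?A \<in> carrier_mat n n" using H by simp
  obtain v where v: "v \<in> carrier_vec n" "v \<noteq> 0\<^sub>v n" "?A *\<^sub>v v = a \<cdot>\<^sub>v v"
    using ev A unfolding eigenvalue_def eigenvector_def by auto
  have A_sym: "transpose_mat ?A = ?A"
    by (metis sym map_mat_transpose)
  have "?A *\<^sub>v conjugate v = conjugate (?A *\<^sub>v v)"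
  proof (rule eq_vecI)
    fix i assume "i < dim_vec (conjugate (?A *\<^sub>v v))"
    hence i: "i < n" using A by simp
    have "conjugate (row ?A i) = row ?A i"
      using i H by (intro eq_vecI) auto
    hence "row ?A i \<bullet> conjugate v = conjugate (row ?A i \<bullet> v)"
      using conjugate_sprod_vec[of "row ?A i" n v] i H v(1) by simp
    thus "(?A *\<^sub>v conjugate v) $ i = conjugate (?A *\<^sub>v v) $ i"
      using i A by simp
  qed (use A in simp)
  hence conj_ev: "?A *\<^sub>v conjugate v = cnj a \<cdot>\<^sub>v conjugate v"
    using v(3) by (simp add: conjugate_smult_vec)
  have "cnj a * (conjugate v \<bullet> v) = (?A *\<^sub>v conjugate v) \<bullet> v"
    using conj_ev v(1) by simp
  also have "\<dots> = conjugate v \<bullet> (?A *\<^sub>v v)"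
    using transpose_vec_mult_scalar[OF A v(1), of "conjugate v"] v(1) A_sym by simp
  also have "\<dots> = a * (conjugate v \<bullet> v)"
    using v by simp
  finally have "cnj a * (v \<bullet>c v) = a * (v \<bullet>c v)"
    using comm_scalar_prod[OF carrier_vec_conjugate[OF v(1)] v(1)] by simp
  moreover have "v \<bullet>c v \<noteq> 0" using v by simp
  ultimately show ?thesis by (simp add: Reals_cnj_iff)
qed

lemma real_symmetric_has_eigenvalue:
  fixes H :: "real mat"
  assumes H: "H \<in> carrier_mat n n" and sym: "transpose_mat H = H" and n: "n > 0"
  shows "\<exists>r. eigenvalue H r"
proof -
  let ?A = "map_mat complex_of_real H"
  have A: "?A \<in> carrier_mat n n" using H by simp
  obtain as where as: "char_poly ?A = (\<Prod>a\<leftarrow>as. [:- a, 1:])" "length as = n"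
    using char_poly_factorized[OF A] by blast
  define a where "a = hd as"
  have "poly (char_poly ?A) a = 0"
    using as n unfolding a_def by (cases as) auto
  hence "eigenvalue ?A a" using eigenvalue_root_char_poly[OF A] by simp
  hence "a = of_real (Re a)"
    using real_symmetric_eigenvalue_real[OF H sym] by (simp add: complex_is_Real_iff complex_eq_iff)
  hence "poly (char_poly H) (Re a) = 0"
    using \<open>poly (char_poly ?A) a = 0\<close> of_real_hom.char_poly_hom[OF H] by (metis of_real_eq_0_iff of_real_hom.poly_map_poly)
  thus ?thesis using eigenvalue_root_char_poly[OF H] by blast
qed

definition orthogonal_mat :: "nat \<Rightarrow> 'a :: comm_ring_1 mat \<Rightarrow> bool" where
  "orthogonal_mat n U \<longleftrightarrow> U \<in> carrier_mat n n \<and> transpose_mat U * U = 1\<^sub>m n"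

lemma transpose_mult_congruence:
  fixes A B H :: "'a :: comm_ring_1 mat"
  assumes A: "A \<in> carrier_mat n n" and B: "B \<in> carrier_mat n n" and H: "H \<in> carrier_mat n n"
  shows "transpose_mat (A * B) * H * (A * B) = transpose_mat B * (transpose_mat A * H * A) * B"
proof -
  have At: "transpose_mat A \<in> carrier_mat n n" and Bt: "transpose_mat B \<in> carrier_mat n n"
    using A B by auto
  have "transpose_mat (A * B) * H * (A * B) = transpose_mat B * transpose_mat A * H * (A * B)"
    using A B by (simp add: transpose_mult)
  also have "\<dots> = transpose_mat B * (transpose_mat A * H * A) * B"
    using A B H At Bt by (simp add: assoc_mult_mat[of _ n n _ n _ n])
  finally show ?thesis .
qed

lemma orthogonal_mat_mult:
  fixes U V :: "'a :: comm_ring_1 mat"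
  assumes "orthogonal_mat n U" and "orthogonal_mat n V"
  shows "orthogonal_mat n (U * V)"
  using assms transpose_mult_congruence[of U n V "1\<^sub>m n"]
  unfolding orthogonal_mat_def by auto

lemma real_scalar_prod_self_eq_0_iff:
  fixes v :: "real vec"
  assumes "v \<in> carrier_vec n"
  shows "v \<bullet> v = 0 \<longleftrightarrow> v = 0\<^sub>v n"
  using conjugate_square_eq_0_vec[OF assms] by simp

definition householder_mat :: "nat \<Rightarrow> 'a :: comm_ring_1 \<Rightarrow> 'a vec \<Rightarrow> 'a mat" where
  "householder_mat n c u = mat n n (\<lambda>(i, j). (if i = j then 1 else 0) - c * u $ i * u $ j)"

lemma householder_mat_orthogonal:
  fixes u :: "'a :: comm_ring_1 vec"
  assumes u: "u \<in> carrier_vec n" and c: "c * c * (u \<bullet> u) = 2 * c"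
  shows "orthogonal_mat n (householder_mat n c u)"
proof -
  let ?W = "householder_mat n c u"
  have W: "?W \<in> carrier_mat n n" unfolding householder_mat_def by simp
  have uu: "(\<Sum>k = 0..<n. u $ k * u $ k) = u \<bullet> u" using u by (simp add: scalar_prod_def)
  have "transpose_mat ?W * ?W = 1\<^sub>m n"
  proof (rule eq_matI)
    fix i j assume "i < dim_row (1\<^sub>m n)" "j < dim_col (1\<^sub>m n)"
    hence i: "i < n" and j: "j < n" by auto
    have "(transpose_mat ?W * ?W) $$ (i, j)
        = (\<Sum>k = 0..<n. ((if k = i then 1 else 0) - c * u $ k * u $ i) * ((if k = j then 1 else 0) - c * u $ k * u $ j))"
      using i j by (simp add: householder_mat_def scalar_prod_def)
    also have "\<dots> = (\<Sum>k = 0..<n. (if k = i then (if k = j then 1 else 0) else 0)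
        - (if k = i then c * u $ k * u $ j else 0) - (if k = j then c * u $ k * u $ i else 0)
        + c * c * u $ i * u $ j * (u $ k * u $ k))"
      by (intro sum.cong refl) (auto simp: algebra_simps)
    also have "\<dots> = (if i = j then 1 else 0) - c * u $ i * u $ j - c * u $ j * u $ i
        + c * c * u $ i * u $ j * (u \<bullet> u)"
      using i j by (simp add: sum.distrib sum_subtractf sum_distrib_left[symmetric] uu)
    also have "c * c * u $ i * u $ j * (u \<bullet> u) = (c * c * (u \<bullet> u)) * (u $ i * u $ j)"
      by (simp only: mult_ac)
    also have "(if i = j then 1 else 0) - c * u $ i * u $ j - c * u $ j * u $ i
        + (c * c * (u \<bullet> u)) * (u $ i * u $ j) = 1\<^sub>m n $$ (i, j)"
      using i j unfolding c by (simp add: algebra_simps)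
    finally show "(transpose_mat ?W * ?W) $$ (i, j) = 1\<^sub>m n $$ (i, j)" .
  qed (use W in auto)
  thus ?thesis using W unfolding orthogonal_mat_def by auto
qed

text \<open>The reflection with \<open>u = e\<^sub>0 - w\<close> and \<open>c = 2 / (u \<bullet> u)\<close> maps \<open>e\<^sub>0\<close> to \<open>w\<close>.
  If \<open>u = 0\<close> then \<open>c = 2 / 0 = 0\<close> and it degenerates to the identity, which is then also correct.\<close>
lemma orthogonal_mat_with_first_col:
  fixes w :: "real vec"
  assumes w: "w \<in> carrier_vec n" and unit: "w \<bullet> w = 1" and n: "n > 0"
  shows "\<exists>W. orthogonal_mat n W \<and> col W 0 = w"
proof -
  define u where "u = unit_vec n 0 - w"
  define c where "c = 2 / (u \<bullet> u)"
  have u: "u \<in> carrier_vec n" unfolding u_def using w by simp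
  have ui: "u $ i = (if i = 0 then 1 else 0) - w $ i" if "i < n" for i
    unfolding u_def using w that by simp
  have "u \<bullet> u = (\<Sum>k = 0..<n. (if k = 0 then 1 - 2 * w $ k else 0) + w $ k * w $ k)"
    using u by (auto simp: scalar_prod_def ui algebra_simps intro!: sum.cong)
  also have "\<dots> = 2 * u $ 0"
    using n unit w ui[OF n] by (simp add: sum.distrib scalar_prod_def)
  finally have uu: "u \<bullet> u = 2 * u $ 0" .
  have "c * c * (u \<bullet> u) = 2 * c"
    unfolding c_def by (cases "u \<bullet> u = 0") (simp_all add: field_simps)
  hence W: "orthogonal_mat n (householder_mat n c u)"
    by (rule householder_mat_orthogonal[OF u])
  have col: "col (householder_mat n c u) 0 $ i = (if i = 0 then 1 else 0) - (c * u $ 0) * u $ i"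
    if "i < n" for i
    using that n by (simp add: householder_mat_def algebra_simps)
  have "col (householder_mat n c u) 0 = w"
  proof (cases "u = 0\<^sub>v n")
    case True
    thus ?thesis using col n ui w by (intro eq_vecI) (auto simp: householder_mat_def)
  next
    case False
    hence "c * u $ 0 = 1"
      using uu real_scalar_prod_self_eq_0_iff[OF u] unfolding c_def by simp
    thus ?thesis using col ui w n by (intro eq_vecI) (auto simp: householder_mat_def)
  qed
  thus ?thesis using W by blast
qed

lemma four_block_congruence:
  fixes R H U :: "'a :: comm_ring_1 mat"
  assumes R: "R \<in> carrier_mat 1 1" and H: "H \<in> carrier_mat k k" and U: "U \<in> carrier_mat k k"
  defines "B \<equiv> four_block_mat (1\<^sub>m 1) (0\<^sub>m 1 k) (0\<^sub>m k 1) U"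
  shows "transpose_mat B * four_block_mat R (0\<^sub>m 1 k) (0\<^sub>m k 1) H * B
       = four_block_mat R (0\<^sub>m 1 k) (0\<^sub>m k 1) (transpose_mat U * H * U)"
proof -
  have Ut: "transpose_mat U \<in> carrier_mat k k" and UtH: "transpose_mat U * H \<in> carrier_mat k k"
    using U H by auto
  have "transpose_mat B = four_block_mat (1\<^sub>m 1) (0\<^sub>m 1 k) (0\<^sub>m k 1) (transpose_mat U)"
    unfolding B_def using U by (subst transpose_four_block_mat) auto
  hence "transpose_mat B * four_block_mat R (0\<^sub>m 1 k) (0\<^sub>m k 1) H
      = four_block_mat R (0\<^sub>m 1 k) (0\<^sub>m k 1) (transpose_mat U * H)"
    using R H Ut by (simp add: mult_four_block_mat[of _ 1 1 _ k _ k _ _ 1 _ k])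
  thus ?thesis
    unfolding B_def using R U UtH by (simp add: mult_four_block_mat[of _ 1 1 _ k _ k _ _ 1 _ k] right_mult_zero_mat[OF UtH])
qed

lemma orthogonal_mat_four_block:
  fixes U :: "'a :: comm_ring_1 mat"
  assumes "orthogonal_mat k U"
  shows "orthogonal_mat (Suc k) (four_block_mat (1\<^sub>m 1) (0\<^sub>m 1 k) (0\<^sub>m k 1) U)"
  using assms four_block_congruence[of "1\<^sub>m 1" "1\<^sub>m k" k U]
  unfolding orthogonal_mat_def by auto

lemma orthogonal_deflation:
  fixes H W :: "'a :: comm_ring_1 mat"
  assumes H: "H \<in> carrier_mat (Suc k) (Suc k)" and sym: "transpose_mat H = H"
    and W: "orthogonal_mat (Suc k) W" and ev: "H *\<^sub>v col W 0 = r \<cdot>\<^sub>v col W 0"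
  shows "\<exists>H'. H' \<in> carrier_mat k k \<and> transpose_mat H' = H' \<and>
    transpose_mat W * H * W = four_block_mat (mat 1 1 (\<lambda>_. r)) (0\<^sub>m 1 k) (0\<^sub>m k 1) H'"
proof -
  let ?n = "Suc k"
  define C where "C = transpose_mat W * H * W"
  define H' where "H' = mat k k (\<lambda>(i,j). C $$ (Suc i, Suc j))"
  have Wc: "W \<in> carrier_mat ?n ?n" and WW: "transpose_mat W * W = 1\<^sub>m ?n"
    using W unfolding orthogonal_mat_def by auto
  have C: "C \<in> carrier_mat ?n ?n" unfolding C_def using Wc H by auto
  have "transpose_mat C = transpose_mat W * transpose_mat (transpose_mat W * H)"
    unfolding C_def using Wc H by (subst transpose_mult) auto
  also have "\<dots> = transpose_mat W * (transpose_mat H * W)"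
    using Wc H by (subst transpose_mult) auto
  also have "\<dots> = C"
    unfolding C_def using sym Wc H by (simp add: assoc_mult_mat[of _ ?n ?n _ ?n _ ?n])
  finally have C_sym: "C $$ (j, i) = C $$ (i, j)" if "i < ?n" "j < ?n" for i j
    using C that by (metis carrier_matD index_transpose_mat(1))
  have C_col0: "C $$ (i, 0) = (if i = 0 then r else 0)" if i: "i < ?n" for i
  proof -
    have "C $$ (i, 0) = col W i \<bullet> (H *\<^sub>v col W 0)"
      unfolding C_def using Wc H i by (simp add: assoc_mult_mat[of _ ?n ?n _ ?n _ ?n] mult_mat_vec_def)
    also have "\<dots> = r * (col W i \<bullet> col W 0)"
      using ev Wc i by simp
    also have "col W i \<bullet> col W 0 = (transpose_mat W * W) $$ (i, 0)"
      using Wc i by simp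
    finally show ?thesis using WW i by simp
  qed
  have "C = four_block_mat (mat 1 1 (\<lambda>_. r)) (0\<^sub>m 1 k) (0\<^sub>m k 1) H'"
  proof (rule eq_matI)
    fix i j assume "i < dim_row (four_block_mat (mat 1 1 (\<lambda>_. r)) (0\<^sub>m 1 k) (0\<^sub>m k 1) H')"
      "j < dim_col (four_block_mat (mat 1 1 (\<lambda>_. r)) (0\<^sub>m 1 k) (0\<^sub>m k 1) H')"
    hence i: "i < ?n" and j: "j < ?n" by (auto simp: H'_def)
    show "C $$ (i, j) = four_block_mat (mat 1 1 (\<lambda>_. r)) (0\<^sub>m 1 k) (0\<^sub>m k 1) H' $$ (i, j)"
      using i j C_col0 C_sym[of j 0] by (cases i; cases j) (auto simp: H'_def)
  qed (use C in \<open>auto simp: H'_def\<close>)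
  moreover have "transpose_mat H' = H'"
    using C_sym by (intro eq_matI) (auto simp: H'_def)
  moreover have "H' \<in> carrier_mat k k" unfolding H'_def by simp
  ultimately show ?thesis unfolding C_def by blast
qed

theorem real_symmetric_orthogonally_diagonalizable:
  fixes H :: "real mat"
  assumes "H \<in> carrier_mat n n" and "transpose_mat H = H"
  shows "\<exists>U d. orthogonal_mat n U \<and> transpose_mat U * H * U = mat_diag n d"
  using assms
proof (induction n arbitrary: H)
  case 0
  have "orthogonal_mat 0 (1\<^sub>m 0) \<and> transpose_mat (1\<^sub>m 0) * H * 1\<^sub>m 0 = mat_diag 0 d" for d
    using 0 unfolding orthogonal_mat_def by (auto intro!: eq_matI simp: mat_diag_def)
  thus ?case by blast
next
  case (Suc k H)
  obtain r v where v: "v \<in> carrier_vec (Suc k)" "v \<noteq> 0\<^sub>v (Suc k)" "H *\<^sub>v v = r \<cdot>\<^sub>v v"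
    using real_symmetric_has_eigenvalue[OF Suc.prems] Suc.prems(1)
    unfolding eigenvalue_def eigenvector_def by auto
  define w where "w = (1 / sqrt (v \<bullet> v)) \<cdot>\<^sub>v v"
  have "v \<bullet> v > 0"
    using conjugate_square_greater_0_vec[OF v(1)] v(2) by simp
  hence w: "w \<in> carrier_vec (Suc k)" "w \<bullet> w = 1" "H *\<^sub>v w = r \<cdot>\<^sub>v w"
    unfolding w_def using v Suc.prems(1)
    by (auto simp: smult_scalar_prod_distrib scalar_prod_smult_distrib mult_mat_vec smult_smult_assoc mult.commute)
  obtain W where W: "orthogonal_mat (Suc k) W" "col W 0 = w"
    using orthogonal_mat_with_first_col[OF w(1,2)] by auto
  obtain H' where H': "H' \<in> carrier_mat k k" "transpose_mat H' = H'"
    and WHW: "transpose_mat W * H * W = four_block_mat (mat 1 1 (\<lambda>_. r)) (0\<^sub>m 1 k) (0\<^sub>m k 1) H'"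
    using orthogonal_deflation[OF Suc.prems W(1)] w(3) W(2) by auto
  obtain U' d' where U': "orthogonal_mat k U'" "transpose_mat U' * H' * U' = mat_diag k d'"
    using Suc.IH[OF H'] by blast
  define B where "B = four_block_mat (1\<^sub>m 1) (0\<^sub>m 1 k) (0\<^sub>m k 1) U'"
  have B: "orthogonal_mat (Suc k) B"
    unfolding B_def using orthogonal_mat_four_block[OF U'(1)] .
  have "transpose_mat (W * B) * H * (W * B) = transpose_mat B * (transpose_mat W * H * W) * B"
    using transpose_mult_congruence W(1) B Suc.prems(1) unfolding orthogonal_mat_def by blast
  also have "\<dots> = four_block_mat (mat 1 1 (\<lambda>_. r)) (0\<^sub>m 1 k) (0\<^sub>m k 1) (mat_diag k d')"
    unfolding WHW B_def U'(2)[symmetric]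
    using four_block_congruence[OF _ H'(1)] U'(1) unfolding orthogonal_mat_def by auto
  also have "\<dots> = mat_diag (Suc k) (\<lambda>i. if i = 0 then r else d' (i - 1))"
    by (rule eq_matI) (auto simp: mat_diag_def)
  finally show ?case using orthogonal_mat_mult[OF W(1) B] by blast
qed

section \<open>Sylvester's law of inertia\<close>

lemma exists_nonzero_orthogonal_vec:
  fixes rs :: "'a :: field vec list"
  assumes rs: "set rs \<subseteq> carrier_vec N" and len: "length rs < N"
  shows "\<exists>z \<in> carrier_vec N. z \<noteq> 0\<^sub>v N \<and> (\<forall>r \<in> set rs. r \<bullet> z = 0)"
proof -
  define B where "B = mat\<^sub>r N N (\<lambda>i. if i < length rs then rs ! i else 0\<^sub>v N)"
  have B: "B \<in> carrier_mat N N" unfolding B_def by simp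
  have "B = mat\<^sub>r N N (\<lambda>i. if i = N - 1 then 0\<^sub>v N else if i < length rs then rs ! i else 0\<^sub>v N)"
    unfolding B_def using len by (intro arg_cong[where f = "mat\<^sub>r N N"]) auto
  also have "det \<dots> = 0"
    using len rs nth_mem by (intro det_row_0) fastforce+
  finally obtain z where z: "z \<in> carrier_vec N" "z \<noteq> 0\<^sub>v N" "B *\<^sub>v z = 0\<^sub>v N"
    using det_0_iff_vec_prod_zero_field[OF B] by blast
  have "rs ! i \<bullet> z = 0" if "i < length rs" for i
  proof -
    have "row B i = rs ! i" unfolding B_def using that len rs nth_mem by fastforce
    thus ?thesis using arg_cong[OF z(3), of "\<lambda>v. v $ i"] that len B by simp
  qed
  thus ?thesis using z by (metis in_set_conv_nth)
qed

text \<open>Dimension count: the pairs \<open>(c, y)\<close> with \<open>X c = Y y\<close>, \<open>c\<close> supported on \<open>P\<close> and \<open>y\<close>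
  supported off \<open>Q\<close> are cut out by \<open>n\<close> equations in more than \<open>n\<close> free coordinates.\<close>
lemma exists_nonzero_vecs_with_equal_images:
  fixes X Y :: "'a :: field mat"
  assumes X: "X \<in> carrier_mat n n" and Y: "Y \<in> carrier_mat n n"
    and more: "card {i. i < n \<and> Q i} < card {i. i < n \<and> P i}"
  shows "\<exists>c y. c \<in> carrier_vec n \<and> y \<in> carrier_vec n \<and> (c \<noteq> 0\<^sub>v n \<or> y \<noteq> 0\<^sub>v n) \<and>
    (\<forall>i < n. \<not> P i \<longrightarrow> c $ i = 0) \<and> (\<forall>i < n. Q i \<longrightarrow> y $ i = 0) \<and> X *\<^sub>v c = Y *\<^sub>v y"
proof -
  define rs where "rs = map (\<lambda>i. row X i @\<^sub>v - row Y i) [0..<n]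
    @ map (\<lambda>i. unit_vec (n + n) i) (filter (\<lambda>i. \<not> P i) [0..<n])
    @ map (\<lambda>i. unit_vec (n + n) (n + i)) (filter Q [0..<n])"
  have len_filter: "length (filter R [0..<n]) = card {i. i < n \<and> R i}" for R
    by (simp add: length_filter_conv_card cong: conj_cong)
  have "length rs = n + length (filter (\<lambda>i. \<not> P i) [0..<n]) + length (filter Q [0..<n])"
    unfolding rs_def by simp
  also have "\<dots> < n + n"
    using sum_length_filter_compl[of P "[0..<n]"] more unfolding len_filter by simp
  finally have "length rs < n + n" .
  moreover have "set rs \<subseteq> carrier_vec (n + n)"
    unfolding rs_def using X Y by auto
  ultimately obtain z where z: "z \<in> carrier_vec (n + n)" "z \<noteq> 0\<^sub>v (n + n)" "\<forall>r \<in> set rs. r \<bullet> z = 0"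
    using exists_nonzero_orthogonal_vec by blast
  define c where "c = vec_first z n"
  define y where "y = vec_last z n"
  have z_eq: "z = c @\<^sub>v y" unfolding c_def y_def using z(1) by simp
  have "(X *\<^sub>v c) $ i = (Y *\<^sub>v y) $ i" if i: "i < n" for i
  proof -
    have "row X i @\<^sub>v - row Y i \<in> set rs" unfolding rs_def using i by auto
    hence "(row X i @\<^sub>v - row Y i) \<bullet> (c @\<^sub>v y) = 0"
      using z(3) unfolding z_eq by blast
    thus ?thesis
      using X Y i by (simp add: c_def y_def scalar_prod_append[of _ n _ n])
  qed
  hence "X *\<^sub>v c = Y *\<^sub>v y" using X Y by (intro eq_vecI) auto
  moreover have "c $ i = 0" if i: "i < n" "\<not> P i" for i
  proof -
    have "unit_vec (n + n) i \<in> set rs" unfolding rs_def using i by auto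
    hence "unit_vec (n + n) i \<bullet> z = 0" using z(3) by blast
    thus ?thesis using z(1) i by (simp add: c_def vec_first_def scalar_prod_left_unit)
  qed
  moreover have "y $ i = 0" if i: "i < n" "Q i" for i
  proof -
    have "unit_vec (n + n) (n + i) \<in> set rs" unfolding rs_def using i by auto
    hence "unit_vec (n + n) (n + i) \<bullet> z = 0" using z(3) by blast
    thus ?thesis using z(1) i by (simp add: y_def vec_last_def scalar_prod_left_unit)
  qed
  moreover have "c \<noteq> 0\<^sub>v n \<or> y \<noteq> 0\<^sub>v n"
    using z(2) z_eq by auto
  moreover have "c \<in> carrier_vec n" "y \<in> carrier_vec n" unfolding c_def y_def by simp_all
  ultimately show ?thesis by blast
qed

lemma congruent_diagonal_quadratic_form:
  fixes H X :: "'a :: comm_ring_1 mat"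
  assumes H: "H \<in> carrier_mat n n" and X: "X \<in> carrier_mat n n"
    and D: "transpose_mat X * H * X = mat_diag n d" and c: "c \<in> carrier_vec n"
  shows "(X *\<^sub>v c) \<bullet> (H *\<^sub>v (X *\<^sub>v c)) = (\<Sum>i<n. d i * (c $ i)^2)"
proof -
  have "(X *\<^sub>v c) \<bullet> (H *\<^sub>v (X *\<^sub>v c)) = (transpose_mat X *\<^sub>v (H *\<^sub>v (X *\<^sub>v c))) \<bullet> c"
    using transpose_vec_mult_scalar[OF X c, of "H *\<^sub>v (X *\<^sub>v c)"] H X c
    by (simp add: comm_scalar_prod[of _ n])
  also have "transpose_mat X *\<^sub>v (H *\<^sub>v (X *\<^sub>v c)) = mat_diag n d *\<^sub>v c"
    unfolding D[symmetric] using H X c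
    by (simp add: assoc_mult_mat_vec[of _ n n _ n] assoc_mult_mat[of _ n n _ n _ n])
  also have "mat_diag n d *\<^sub>v c = vec n (\<lambda>i. d i * c $ i)"
  proof (rule eq_vecI)
    fix i assume "i < dim_vec (vec n (\<lambda>i. d i * c $ i))"
    hence i: "i < n" by simp
    have "(mat_diag n d *\<^sub>v c) $ i = (\<Sum>j = 0..<n. (if i = j then d j else 0) * c $ j)"
      using i c by (simp add: mat_diag_def scalar_prod_def)
    also have "\<dots> = (\<Sum>j = 0..<n. if j = i then d i * c $ j else 0)"
      by (rule sum.cong) auto
    finally show "(mat_diag n d *\<^sub>v c) $ i = vec n (\<lambda>i. d i * c $ i) $ i" using i by simp
  qed (simp add: mat_diag_def)
  also have "\<dots> \<bullet> c = (\<Sum>i<n. d i * (c $ i)^2)"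
    using c by (simp add: scalar_prod_def power2_eq_square lessThan_atLeast0 mult.assoc)
  finally show ?thesis .
qed

text \<open>Otherwise some nonzero \<open>X c = Y y\<close> has \<open>c\<close> supported where \<open>d > 0\<close> and \<open>y\<close> where
  \<open>e \<le> 0\<close>; its quadratic form is then both \<open>\<ge> 0\<close> and \<open>\<le> 0\<close>, which forces \<open>c = 0\<close> and so \<open>y = 0\<close>.\<close>
lemma sylvester_positive_index_le:
  fixes H X Y :: "real mat"
  assumes H: "H \<in> carrier_mat n n" and X: "X \<in> carrier_mat n n" and Y: "Y \<in> carrier_mat n n"
    and DX: "transpose_mat X * H * X = mat_diag n d"
    and DY: "transpose_mat Y * H * Y = mat_diag n e"
    and Y_inj: "\<And>y. y \<in> carrier_vec n \<Longrightarrow> Y *\<^sub>v y = 0\<^sub>v n \<Longrightarrow> y = 0\<^sub>v n"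
  shows "card {i. i < n \<and> d i > 0} \<le> card {i. i < n \<and> e i > 0}"
proof (rule ccontr)
  assume "\<not> ?thesis"
  then obtain c y where c: "c \<in> carrier_vec n" and y: "y \<in> carrier_vec n"
    and nz: "c \<noteq> 0\<^sub>v n \<or> y \<noteq> 0\<^sub>v n"
    and c0: "\<forall>i < n. \<not> d i > 0 \<longrightarrow> c $ i = 0" and y0: "\<forall>i < n. e i > 0 \<longrightarrow> y $ i = 0"
    and XY: "X *\<^sub>v c = Y *\<^sub>v y"
    using exists_nonzero_vecs_with_equal_images[OF X Y, of "\<lambda>i. e i > 0" "\<lambda>i. d i > 0"] by auto
  have c_terms: "d i * (c $ i)^2 \<ge> 0" if "i < n" for i
    using c0 that by (cases "d i > 0") auto
  have "(\<Sum>i<n. d i * (c $ i)^2) = (\<Sum>i<n. e i * (y $ i)^2)"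
    using congruent_diagonal_quadratic_form[OF H X DX c] congruent_diagonal_quadratic_form[OF H Y DY y] XY
    by simp
  also have "\<dots> \<le> 0"
    using y0 by (intro sum_nonpos) (auto simp: mult_nonpos_nonneg not_less)
  finally have "(\<Sum>i<n. d i * (c $ i)^2) = 0"
    using sum_nonneg[of "{..<n}" "\<lambda>i. d i * (c $ i)^2"] c_terms by force
  hence "\<forall>i \<in> {..<n}. d i * (c $ i)^2 = 0"
    using c_terms by (subst sum_nonneg_eq_0_iff[symmetric]) auto
  hence "c $ i = 0" if "i < n" for i
    using c0 that by (metis lessThan_iff less_irrefl mult_eq_0_iff zero_eq_power2)
  hence "c = 0\<^sub>v n"
    using c by (intro eq_vecI) auto
  moreover have "X *\<^sub>v 0\<^sub>v n = 0\<^sub>v n"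
    using X by (intro eq_vecI) (auto simp: scalar_prod_def)
  ultimately have "y = 0\<^sub>v n"
    using Y_inj[OF y] XY by simp
  with \<open>c = 0\<^sub>v n\<close> nz show False by simp
qed

lemma orthogonal_congruence_similar:
  fixes H U :: "'a :: field mat"
  assumes U: "orthogonal_mat n U" and H: "H \<in> carrier_mat n n"
  shows "similar_mat (transpose_mat U * H * U) H"
proof -
  have Uc: "U \<in> carrier_mat n n" and UU: "transpose_mat U * U = 1\<^sub>m n"
    using U unfolding orthogonal_mat_def by auto
  have "U * transpose_mat U = 1\<^sub>m n"
    using mat_mult_left_right_inverse[OF _ Uc UU] Uc by simp
  thus ?thesis using Uc H UU by (intro similar_matI[of _ _ _ _ n]) auto
qed

lemma proots_prod_list_linear_factors:
  "proots (\<Prod>a\<leftarrow>as. [:- a, 1:]) = mset (as :: 'a :: idom list)"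
proof (induction as)
  case (Cons a as)
  have "(\<Prod>a\<leftarrow>as. [:- a, 1:]) \<noteq> 0" by (auto simp: prod_list_zero_iff)
  hence "proots ([:- a, 1:] * (\<Prod>a\<leftarrow>as. [:- a, 1:])) = proots [:- a, 1:] + mset as"
    using Cons.IH by (subst proots_mult) auto
  thus ?case by simp
qed simp

lemma count_roots_char_poly_mat_diag:
  fixes e :: "nat \<Rightarrow> 'a :: idom"
  shows "size (filter_mset P (proots (char_poly (mat_diag n e)))) = card {i. i < n \<and> P (e i)}"
proof -
  have "diag_mat (mat_diag n e) = map e [0..<n]"
    by (intro nth_equalityI) (auto simp: diag_mat_def mat_diag_def)
  moreover have "upper_triangular (mat_diag n e)"
    by (auto simp: upper_triangular_def mat_diag_def)
  ultimately have "char_poly (mat_diag n e) = (\<Prod>a\<leftarrow>map e [0..<n]. [:- a, 1:])"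
    using char_poly_upper_triangular[OF mat_diag_dim] by metis
  hence "filter_mset P (proots (char_poly (mat_diag n e))) = mset (filter P (map e [0..<n]))"
    by (simp only: proots_prod_list_linear_factors mset_filter)
  thus ?thesis
    by (simp add: filter_map length_filter_conv_card cong: conj_cong)
qed

lemma card_pos_plus_card_neg:
  fixes f :: "nat \<Rightarrow> 'a :: linordered_idom"
  shows "card {i. i < n \<and> f i > 0} + card {i. i < n \<and> f i < 0} = card {i. i < n \<and> f i \<noteq> 0}"
proof -
  have "{i. i < n \<and> f i \<noteq> 0} = {i. i < n \<and> f i > 0} \<union> {i. i < n \<and> f i < 0}" by auto
  thus ?thesis by (simp add: card_Un_disjoint disjoint_iff)
qed

theorem inertia_congruent_diagonal:
  fixes H X :: "real mat"
  assumes H: "H \<in> carrier_mat n n" and sym: "transpose_mat H = H" and X: "X \<in> carrier_mat n n"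
    and DX: "transpose_mat X * H * X = mat_diag n d" and nz: "\<And>i. i < n \<Longrightarrow> d i \<noteq> 0"
  shows "pos_inertia H = card {i. i < n \<and> d i > 0} \<and> neg_inertia H = card {i. i < n \<and> d i < 0}"
proof -
  obtain U e where U: "orthogonal_mat n U" and DU: "transpose_mat U * H * U = mat_diag n e"
    using real_symmetric_orthogonally_diagonalizable[OF H sym] by blast
  have Uc: "U \<in> carrier_mat n n" using U unfolding orthogonal_mat_def by simp
  have U_inj: "y = 0\<^sub>v n" if "y \<in> carrier_vec n" "U *\<^sub>v y = 0\<^sub>v n" for y
    using that U assoc_mult_mat_vec[of "transpose_mat U" n n U n y] unfolding orthogonal_mat_def by auto
  have "char_poly H = char_poly (mat_diag n e)"
    using char_poly_similar[OF orthogonal_congruence_similar[OF U H]] DU by simp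
  hence count: "size (filter_mset P (proots (char_poly H))) = card {i. i < n \<and> P (e i)}" for P
    by (simp add: count_roots_char_poly_mat_diag)
  have neg: "transpose_mat V * (- H) * V = mat_diag n (\<lambda>i. - f i)"
    if "V \<in> carrier_mat n n" "transpose_mat V * H * V = mat_diag n f" for V f
  proof -
    have "- mat_diag n f = mat_diag n (\<lambda>i. - f i)" by (intro eq_matI) (auto simp: mat_diag_def)
    thus ?thesis using that H by simp
  qed
  have "card {i. i < n \<and> d i > 0} \<le> card {i. i < n \<and> e i > 0}"
    by (rule sylvester_positive_index_le[OF H X Uc DX DU U_inj])
  moreover have "card {i. i < n \<and> - d i > 0} \<le> card {i. i < n \<and> - e i > 0}"
    by (rule sylvester_positive_index_le[OF _ X Uc neg[OF X DX] neg[OF Uc DU] U_inj]) (use H in simp)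
  moreover have "card {i. i < n \<and> e i > 0} + card {i. i < n \<and> e i < 0} \<le> n"
    unfolding card_pos_plus_card_neg using card_mono[of "{..<n}" "{i. i < n \<and> e i \<noteq> 0}"] by auto
  moreover have "card {i. i < n \<and> d i > 0} + card {i. i < n \<and> d i < 0} = n"
  proof -
    have "{i. i < n \<and> d i \<noteq> 0} = {..<n}" using nz by auto
    thus ?thesis unfolding card_pos_plus_card_neg by simp
  qed
  ultimately have "card {i. i < n \<and> d i > 0} = card {i. i < n \<and> e i > 0} \<and>
      card {i. i < n \<and> d i < 0} = card {i. i < n \<and> e i < 0}"
    by simp
  thus ?thesis unfolding pos_inertia_def neg_inertia_def count by simp
qed

section \<open>Kronecker products and the matrix \<open>(x ^ max k k')\<close>\<close>

lemma index_congruence_mat: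
  fixes X M :: "'a :: comm_semiring_0 mat"
  assumes X: "X \<in> carrier_mat n n" and M: "M \<in> carrier_mat n n" and s: "s < n" and t: "t < n"
  shows "(transpose_mat X * M * X) $$ (s, t) = (\<Sum>r<n. \<Sum>r'<n. X $$ (r, s) * M $$ (r, r') * X $$ (r', t))"
proof -
  have "(transpose_mat X * M * X) $$ (s, t) = (\<Sum>r<n. X $$ (r, s) * (\<Sum>r'<n. M $$ (r, r') * X $$ (r', t)))"
    using X M s t by (simp add: scalar_prod_def lessThan_atLeast0)
  also have "\<dots> = (\<Sum>r<n. \<Sum>r'<n. X $$ (r, s) * M $$ (r, r') * X $$ (r', t))"
    by (simp add: sum_distrib_left mult.assoc)
  finally show ?thesis .
qed

text \<open>The Kronecker product \<open>A \<otimes> B\<close> of an \<open>m \<times> m\<close> and an \<open>m' \<times> m'\<close> matrix, with rows and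
  columns indexed by \<open>{..<n}\<close> through a bijection \<open>\<sigma>\<close> onto \<open>{..<m} \<times> {..<m'}\<close>.\<close>
definition kronecker_mat :: "(nat \<Rightarrow> nat \<times> nat) \<Rightarrow> nat \<Rightarrow> 'a :: times mat \<Rightarrow> 'a mat \<Rightarrow> 'a mat" where
  "kronecker_mat \<sigma> n A B =
     mat n n (\<lambda>(r, r'). A $$ (fst (\<sigma> r), fst (\<sigma> r')) * B $$ (snd (\<sigma> r), snd (\<sigma> r')))"

lemma kronecker_mat_congruence:
  fixes A B U V :: "'a :: comm_semiring_0 mat"
  assumes \<sigma>: "bij_betw \<sigma> {..<n} ({..<m} \<times> {..<m'})"
    and A: "A \<in> carrier_mat m m" and U: "U \<in> carrier_mat m m"
    and B: "B \<in> carrier_mat m' m'" and V: "V \<in> carrier_mat m' m'"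
  shows "transpose_mat (kronecker_mat \<sigma> n U V) * kronecker_mat \<sigma> n A B * kronecker_mat \<sigma> n U V
       = kronecker_mat \<sigma> n (transpose_mat U * A * U) (transpose_mat V * B * V)"
proof (rule eq_matI)
  fix s t assume "s < dim_row (kronecker_mat \<sigma> n (transpose_mat U * A * U) (transpose_mat V * B * V))"
    "t < dim_col (kronecker_mat \<sigma> n (transpose_mat U * A * U) (transpose_mat V * B * V))"
  hence s: "s < n" and t: "t < n" by (auto simp: kronecker_mat_def)
  have "\<sigma> s \<in> {..<m} \<times> {..<m'}" "\<sigma> t \<in> {..<m} \<times> {..<m'}"
    using \<sigma> s t unfolding bij_betw_def by auto
  then obtain i i' j j' where si: "\<sigma> s = (i, i')" "i < m" "i' < m'" and tj: "\<sigma> t = (j, j')" "j < m" "j' < m'"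
    by (cases "\<sigma> s"; cases "\<sigma> t") auto
  define F where "F k k' = U $$ (k, i) * A $$ (k, k') * U $$ (k', j)" for k k'
  define G where "G l l' = V $$ (l, i') * B $$ (l, l') * V $$ (l', j')" for l l'
  have "(transpose_mat (kronecker_mat \<sigma> n U V) * kronecker_mat \<sigma> n A B * kronecker_mat \<sigma> n U V) $$ (s, t)
      = (\<Sum>r<n. \<Sum>r'<n. F (fst (\<sigma> r)) (fst (\<sigma> r')) * G (snd (\<sigma> r)) (snd (\<sigma> r')))"
    using s t si tj
    by (subst index_congruence_mat[of _ n]) (auto simp: kronecker_mat_def F_def G_def mult_ac intro!: sum.cong)
  also have "\<dots> = (\<Sum>u\<in>{..<m} \<times> {..<m'}. \<Sum>u'\<in>{..<m} \<times> {..<m'}. F (fst u) (fst u') * G (snd u) (snd u'))"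
    (is "_ = (\<Sum>u\<in>_. \<Sum>u'\<in>_. ?g u u')")
    using sum.reindex_bij_betw[OF \<sigma>, of "\<lambda>u. \<Sum>u'\<in>{..<m} \<times> {..<m'}. ?g u u'"]
      sum.reindex_bij_betw[OF \<sigma>, of "?g _"] by simp
  also have "\<dots> = (\<Sum>k<m. \<Sum>l<m'. \<Sum>k'<m. \<Sum>l'<m'. F k k' * G l l')"
    by (simp add: sum.cartesian_product')
  also have "\<dots> = (\<Sum>k<m. \<Sum>k'<m. F k k') * (\<Sum>l<m'. \<Sum>l'<m'. G l l')"
    by (simp add: sum_product sum.swap[of _ "{..<m'}" "{..<m}"])
  also have "\<dots> = (transpose_mat U * A * U) $$ (i, j) * (transpose_mat V * B * V) $$ (i', j')"
    unfolding F_def G_def index_congruence_mat[OF U A si(2) tj(2)] index_congruence_mat[OF V B si(3) tj(3)] ..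
  finally show "(transpose_mat (kronecker_mat \<sigma> n U V) * kronecker_mat \<sigma> n A B * kronecker_mat \<sigma> n U V) $$ (s, t)
      = kronecker_mat \<sigma> n (transpose_mat U * A * U) (transpose_mat V * B * V) $$ (s, t)"
    using s t si tj by (simp add: kronecker_mat_def)
qed (auto simp: kronecker_mat_def)

lemma kronecker_mat_diag:
  fixes d e :: "nat \<Rightarrow> 'a :: mult_zero"
  assumes \<sigma>: "bij_betw \<sigma> {..<n} ({..<m} \<times> {..<m'})"
  shows "kronecker_mat \<sigma> n (mat_diag m d) (mat_diag m' e) = mat_diag n (\<lambda>r. d (fst (\<sigma> r)) * e (snd (\<sigma> r)))"
proof (rule eq_matI)
  fix r r' assume "r < dim_row (mat_diag n (\<lambda>r. d (fst (\<sigma> r)) * e (snd (\<sigma> r))))"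
    "r' < dim_col (mat_diag n (\<lambda>r. d (fst (\<sigma> r)) * e (snd (\<sigma> r))))"
  hence r: "r < n" and r': "r' < n" by (auto simp: mat_diag_def)
  hence "\<sigma> r \<in> {..<m} \<times> {..<m'}" "\<sigma> r' \<in> {..<m} \<times> {..<m'}" and "\<sigma> r = \<sigma> r' \<longleftrightarrow> r = r'"
    using \<sigma> unfolding bij_betw_def inj_on_def by auto
  thus "kronecker_mat \<sigma> n (mat_diag m d) (mat_diag m' e) $$ (r, r')
      = mat_diag n (\<lambda>r. d (fst (\<sigma> r)) * e (snd (\<sigma> r))) $$ (r, r')"
    using r r' by (auto simp: kronecker_mat_def mat_diag_def prod_eq_iff)
qed (auto simp: kronecker_mat_def mat_diag_def)

definition max_power_mat :: "nat \<Rightarrow> 'a :: monoid_mult \<Rightarrow> 'a mat" where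
  "max_power_mat m x = mat m m (\<lambda>(k, k'). x ^ max k k')"

definition difference_basis_mat :: "nat \<Rightarrow> 'a :: ring_1 mat" where
  "difference_basis_mat m =
     mat m m (\<lambda>(k, a). if a = 0 then of_bool (k = m - 1) else of_bool (k = a) - of_bool (k = a - 1))"

lemma max_power_mat_carrier [simp]: "max_power_mat m x \<in> carrier_mat m m"
  by (simp add: max_power_mat_def)

lemma difference_basis_mat_carrier [simp]: "difference_basis_mat m \<in> carrier_mat m m"
  by (simp add: difference_basis_mat_def)

definition max_power_pivot :: "nat \<Rightarrow> 'a :: comm_ring_1 \<Rightarrow> nat \<Rightarrow> 'a" where
  "max_power_pivot m x a = (if a = 0 then x ^ (m - 1) else x ^ (a - 1) - x ^ a)"

lemma sum_difference_basis_mat: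
  fixes f :: "nat \<Rightarrow> 'a :: ring_1"
  assumes a: "a < m"
  shows "(\<Sum>k<m. difference_basis_mat m $$ (k, a) * f k) = (if a = 0 then f (m - 1) else f a - f (a - 1))"
proof (cases "a = 0")
  case True
  hence "(\<Sum>k<m. difference_basis_mat m $$ (k, a) * f k) = (\<Sum>k<m. if k = m - 1 then f k else 0)"
    using a by (intro sum.cong) (auto simp: difference_basis_mat_def)
  thus ?thesis using True a by simp
next
  case False
  hence "(\<Sum>k<m. difference_basis_mat m $$ (k, a) * f k)
      = (\<Sum>k<m. (if k = a then f k else 0) - (if k = a - 1 then f k else 0))"
    using a by (intro sum.cong) (auto simp: difference_basis_mat_def algebra_simps)
  moreover have "a - 1 < m" using a by simp
  ultimately show ?thesis using False a by (simp add: sum_subtractf)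
qed

text \<open>Pairing with a difference column takes a discrete difference in one index; since
  \<open>x ^ max k k'\<close> is constant in \<open>k\<close> for \<open>k \<le> k'\<close>, the mixed differences vanish off the diagonal.\<close>
lemma max_power_mat_congruence:
  fixes x :: "'a :: comm_ring_1"
  shows "transpose_mat (difference_basis_mat m) * max_power_mat m x * difference_basis_mat m
       = mat_diag m (max_power_pivot m x)"
proof (rule eq_matI)
  fix a a' assume "a < dim_row (mat_diag m (max_power_pivot m x))" "a' < dim_col (mat_diag m (max_power_pivot m x))"
  hence a: "a < m" and a': "a' < m" by (auto simp: mat_diag_def)
  let ?D = "difference_basis_mat m :: 'a mat"
  let ?\<Delta> = "\<lambda>b (f :: nat \<Rightarrow> 'a). if b = 0 then f (m - 1) else f b - f (b - 1)"
  have "(transpose_mat ?D * max_power_mat m x * ?D) $$ (a, a')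
      = (\<Sum>k<m. ?D $$ (k, a) * (\<Sum>k'<m. ?D $$ (k', a') * x ^ max k k'))"
    using a a' by (subst index_congruence_mat[of _ m])
      (auto simp: difference_basis_mat_def max_power_mat_def sum_distrib_left mult_ac intro!: sum.cong)
  also have "\<dots> = ?\<Delta> a (\<lambda>k. ?\<Delta> a' (\<lambda>k'. x ^ max k k'))"
    by (simp only: sum_difference_basis_mat[OF a] sum_difference_basis_mat[OF a'])
  also have "\<dots> = mat_diag m (max_power_pivot m x) $$ (a, a')"
    using a a' unfolding mat_diag_def max_power_pivot_def
    by (auto simp: max_def) (rule arg_cong[where f = "(^) x"], linarith)+
  finally show "(transpose_mat ?D * max_power_mat m x * ?D) $$ (a, a') = mat_diag m (max_power_pivot m x) $$ (a, a')" .
qed (auto simp: difference_basis_mat_def max_power_mat_def mat_diag_def)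

lemma max_power_pivot_sign:
  fixes x :: "'a :: linordered_idom"
  assumes "x > 1"
  shows "max_power_pivot m x a > 0 \<longleftrightarrow> a = 0" and "max_power_pivot m x a < 0 \<longleftrightarrow> a \<noteq> 0"
proof -
  have "x ^ (a - 1) < x ^ a" if "a \<noteq> 0"
    using assms that by (intro power_strict_increasing) auto
  thus "max_power_pivot m x a > 0 \<longleftrightarrow> a = 0" and "max_power_pivot m x a < 0 \<longleftrightarrow> a \<noteq> 0"
    using assms by (auto simp: max_power_pivot_def)
qed

section \<open>The LCM matrix of \<open>{p\<^sup>k q\<^sup>l}\<close>\<close>

lemma multiplicity_prime_power_mult_other:
  fixes p q :: nat
  assumes p: "prime p" and q: "prime q" and pq: "p \<noteq> q"
  shows "multiplicity p (p ^ k * q ^ l) = k"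
proof -
  have "multiplicity p (p ^ k * q ^ l) = multiplicity p (p ^ k) + multiplicity p (q ^ l)"
    using p q by (intro prime_elem_multiplicity_mult_distrib) (auto simp: prime_gt_0_nat)
  also have "multiplicity p (q ^ l) = l * multiplicity p q"
    using p q by (intro prime_elem_multiplicity_power_distrib) (auto simp: prime_gt_0_nat)
  finally show ?thesis using p q pq by (simp add: prime_multiplicity_other)
qed

lemma inj_prime_power_pair:
  fixes p q :: nat
  assumes "prime p" and "prime q" and "p \<noteq> q"
  shows "inj (\<lambda>(k, l). p ^ k * q ^ l)"
proof (rule injI, clarify)
  fix k l k' l' :: nat
  assume eq: "p ^ k * q ^ l = p ^ k' * q ^ l'"
  show "k = k' \<and> l = l'"
    using arg_cong[OF eq, of "multiplicity p"] arg_cong[OF eq, of "multiplicity q"] assms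
      multiplicity_prime_power_mult_other[of p q] multiplicity_prime_power_mult_other[of q p]
    by (simp add: mult.commute)
qed

lemma lcm_prime_power_pair:
  fixes p q :: nat
  assumes "prime p" and "prime q" and "p \<noteq> q"
  shows "lcm (p ^ k * q ^ l) (p ^ k' * q ^ l') = p ^ max k k' * q ^ max l l'"
proof (rule dvd_antisym)
  show "lcm (p ^ k * q ^ l) (p ^ k' * q ^ l') dvd p ^ max k k' * q ^ max l l'"
    by (intro lcm_least mult_dvd_mono) (auto simp: le_imp_power_dvd)
  have "p ^ max k k' dvd lcm (p ^ k * q ^ l) (p ^ k' * q ^ l')"
    by (cases "k \<le> k'") (auto simp: max_def intro: dvd_trans[OF _ dvd_lcm1] dvd_trans[OF _ dvd_lcm2])
  moreover have "q ^ max l l' dvd lcm (p ^ k * q ^ l) (p ^ k' * q ^ l')"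
    by (cases "l \<le> l'") (auto simp: max_def intro: dvd_trans[OF _ dvd_lcm1] dvd_trans[OF _ dvd_lcm2])
  moreover have "coprime (p ^ max k k') (q ^ max l l')"
    using assms by (simp add: primes_coprime)
  ultimately show "p ^ max k k' * q ^ max l l' dvd lcm (p ^ k * q ^ l) (p ^ k' * q ^ l')"
    by (rule divides_mult)
qed

lemma sorted_list_of_set_image_enumeration:
  fixes f :: "'a \<Rightarrow> 'b :: linorder"
  assumes A: "finite A" and f: "inj_on f A"
  obtains \<sigma> where "bij_betw \<sigma> {..<card A} A"
    and "\<And>r. r < card A \<Longrightarrow> sorted_list_of_set (f ` A) ! r = f (\<sigma> r)"
proof
  let ?xs = "sorted_list_of_set (f ` A)"
  have len: "length ?xs = card A" using A f by (simp add: card_image)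
  have xs: "bij_betw ((!) ?xs) {..<card A} (f ` A)"
    using A len by (intro bij_betw_nth) auto
  show "bij_betw (the_inv_into A f \<circ> (!) ?xs) {..<card A} A"
    using bij_betw_trans[OF xs bij_betw_the_inv_into[OF inj_on_imp_bij_betw[OF f]]] .
  show "?xs ! r = f ((the_inv_into A f \<circ> (!) ?xs) r)" if "r < card A" for r
  proof -
    have "?xs ! r \<in> f ` A" using xs that by (auto simp: bij_betw_def)
    thus ?thesis using f by (simp add: f_the_inv_into_f)
  qed
qed

lemma card_pq_set_and_lcm_matrix_kronecker:
  fixes p q :: nat
  assumes p: "prime p" and q: "prime q" and pq: "p \<noteq> q" and m: "m > 0"
  obtains \<sigma> where "bij_betw \<sigma> {..<m ^ 2} ({..<m} \<times> {..<m})" and "card (pq_set p q m) = m ^ 2"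
    and "lcm_matrix (pq_set p q m)
         = kronecker_mat \<sigma> (m ^ 2) (max_power_mat m (real p)) (max_power_mat m (real q))"
proof -
  let ?f = "\<lambda>(k, l). p ^ k * q ^ l"
  let ?P = "{..<m} \<times> {..<m}"
  have S: "pq_set p q m = ?f ` ?P"
    using m unfolding pq_set_def by (fastforce simp: image_def)
  have f: "inj_on ?f ?P" using inj_prime_power_pair[OF p q pq] by (rule inj_on_subset) simp
  have card_P: "card ?P = m ^ 2" by (simp add: power2_eq_square)
  obtain \<sigma> where \<sigma>: "bij_betw \<sigma> {..<m ^ 2} ?P"
    and xs: "\<And>r. r < m ^ 2 \<Longrightarrow> sorted_list_of_set (pq_set p q m) ! r = ?f (\<sigma> r)"
    using sorted_list_of_set_image_enumeration[OF _ f] unfolding S card_P by auto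
  have "card (pq_set p q m) = m ^ 2" using card_image[OF f] S card_P by simp
  moreover have "lcm_matrix (pq_set p q m)
      = kronecker_mat \<sigma> (m ^ 2) (max_power_mat m (real p)) (max_power_mat m (real q))"
  proof (rule eq_matI)
    fix r r' assume "r < dim_row (kronecker_mat \<sigma> (m ^ 2) (max_power_mat m (real p)) (max_power_mat m (real q)))"
      "r' < dim_col (kronecker_mat \<sigma> (m ^ 2) (max_power_mat m (real p)) (max_power_mat m (real q)))"
    hence r: "r < m ^ 2" and r': "r' < m ^ 2" by (auto simp: kronecker_mat_def)
    hence "\<sigma> r \<in> ?P" "\<sigma> r' \<in> ?P" using \<sigma> unfolding bij_betw_def by auto
    thus "lcm_matrix (pq_set p q m) $$ (r, r')
        = kronecker_mat \<sigma> (m ^ 2) (max_power_mat m (real p)) (max_power_mat m (real q)) $$ (r, r')"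
      using r r' xs \<open>card (pq_set p q m) = m ^ 2\<close> lcm_prime_power_pair[OF p q pq]
      by (auto simp: lcm_matrix_def kronecker_mat_def max_power_mat_def case_prod_beta Let_def)
  qed (use \<open>card (pq_set p q m) = m ^ 2\<close> in \<open>auto simp: lcm_matrix_def kronecker_mat_def Let_def\<close>)
  ultimately show ?thesis using that \<sigma> by blast
qed

lemma card_filter_bij_betw:
  assumes "bij_betw \<sigma> A B"
  shows "card {x \<in> A. P (\<sigma> x)} = card {y \<in> B. P y}"
proof (rule bij_betw_same_card, rule bij_betw_subset[OF assms])
  show "\<sigma> ` {x \<in> A. P (\<sigma> x)} = {y \<in> B. P y}"
    using assms unfolding bij_betw_def by force
qed auto

lemma card_index_pairs_both_or_neither_zero:
  assumes "m > 0"
  shows "card {u \<in> {..<m} \<times> {..<m :: nat}. (fst u = 0) = (snd u = 0)} = (m - 1) ^ 2 + 1"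
proof -
  have "{u \<in> {..<m} \<times> {..<m}. (fst u = 0) = (snd u = 0)} = insert (0, 0) ({1..<m} \<times> {1..<m})"
    using assms by auto
  thus ?thesis by (simp add: power2_eq_square)
qed

lemma card_index_pairs_one_zero:
  shows "card {u \<in> {..<m} \<times> {..<m :: nat}. (fst u = 0) \<noteq> (snd u = 0)} = 2 * m - 2"
proof -
  have "{u \<in> {..<m} \<times> {..<m}. (fst u = 0) \<noteq> (snd u = 0)} = {0} \<times> {1..<m} \<union> {1..<m} \<times> {0}"
    by auto
  thus ?thesis by (simp add: card_Un_disjoint disjoint_iff)
qed

lemma lcm_matrix_symmetric: "transpose_mat (lcm_matrix S) = lcm_matrix S"
  by (rule eq_matI) (auto simp: lcm_matrix_def Let_def lcm.commute)

lemma inertia_lcm_matrix_pq_set: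
  fixes p q :: nat
  assumes p: "prime p" and q: "prime q" and pq: "p \<noteq> q" and m: "m > 0"
  shows "pos_inertia (lcm_matrix (pq_set p q m)) = (m - 1) ^ 2 + 1"
    and "neg_inertia (lcm_matrix (pq_set p q m)) = 2 * m - 2"
proof -
  let ?n = "m ^ 2" and ?M = "lcm_matrix (pq_set p q m)" and ?D = "difference_basis_mat m :: real mat"
  obtain \<sigma> where \<sigma>: "bij_betw \<sigma> {..<?n} ({..<m} \<times> {..<m})"
    and M: "?M = kronecker_mat \<sigma> ?n (max_power_mat m (real p)) (max_power_mat m (real q))"
    using card_pq_set_and_lcm_matrix_kronecker[OF p q pq m] by blast
  define d where "d r = max_power_pivot m (real p) (fst (\<sigma> r)) * max_power_pivot m (real q) (snd (\<sigma> r))" for r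
  have X: "kronecker_mat \<sigma> ?n ?D ?D \<in> carrier_mat ?n ?n" and Mc: "?M \<in> carrier_mat ?n ?n"
    by (simp_all add: M kronecker_mat_def)
  have congr: "transpose_mat (kronecker_mat \<sigma> ?n ?D ?D) * ?M * kronecker_mat \<sigma> ?n ?D ?D = mat_diag ?n d"
    unfolding M d_def kronecker_mat_congruence[OF \<sigma> max_power_mat_carrier difference_basis_mat_carrier
      max_power_mat_carrier difference_basis_mat_carrier] max_power_mat_congruence kronecker_mat_diag[OF \<sigma>] ..
  have p1: "real p > 1" and q1: "real q > 1" using p q prime_gt_1_nat by auto
  hence d_pos: "d r > 0 \<longleftrightarrow> (fst (\<sigma> r) = 0) = (snd (\<sigma> r) = 0)"
    and d_neg: "d r < 0 \<longleftrightarrow> (fst (\<sigma> r) = 0) \<noteq> (snd (\<sigma> r) = 0)" for r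
    unfolding d_def using max_power_pivot_sign[OF p1, of m] max_power_pivot_sign[OF q1, of m]
    by (auto simp: zero_less_mult_iff mult_less_0_iff)
  have "d r \<noteq> 0" for r using d_pos[of r] d_neg[of r] by auto
  hence inertia: "pos_inertia ?M = card {r. r < ?n \<and> d r > 0} \<and> neg_inertia ?M = card {r. r < ?n \<and> d r < 0}"
    by (intro inertia_congruent_diagonal[OF Mc lcm_matrix_symmetric X congr])
  have "card {r. r < ?n \<and> d r > 0} = (m - 1) ^ 2 + 1"
    using card_filter_bij_betw[OF \<sigma>, of "\<lambda>u. (fst u = 0) = (snd u = 0)"]
      card_index_pairs_both_or_neither_zero[OF m] unfolding d_pos by (simp add: lessThan_def Collect_conj_eq)
  moreover have "card {r. r < ?n \<and> d r < 0} = 2 * m - 2"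
    using card_filter_bij_betw[OF \<sigma>, of "\<lambda>u. (fst u = 0) \<noteq> (snd u = 0)"]
      card_index_pairs_one_zero[of m] unfolding d_neg by (simp add: lessThan_def Collect_conj_eq)
  ultimately show "pos_inertia ?M = (m - 1) ^ 2 + 1" and "neg_inertia ?M = 2 * m - 2"
    using inertia by simp_all
qed

theorem mainTheorem15:
  fixes p q :: nat
  assumes "prime p" and "prime q" and "p \<noteq> q"
  shows "(\<forall>m::nat. m > 1 \<longrightarrow>
            card (pq_set p q m) = m ^ 2 \<and>
            neg_inertia (lcm_matrix (pq_set p q m)) = 2 * m - 2 \<and>
            pos_inertia (lcm_matrix (pq_set p q m)) = (m - 1) ^ 2 + 1)
       \<and> (\<lambda>m. real (pos_inertia (lcm_matrix (pq_set p q m))) / real (card (pq_set p q m)))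
            \<longlonglongrightarrow> 1"
proof
  have card: "card (pq_set p q m) = m ^ 2" if "m > 0" for m
    using card_pq_set_and_lcm_matrix_kronecker[OF assms that] by blast
  note inertia = inertia_lcm_matrix_pq_set[OF assms]
  show "\<forall>m::nat. m > 1 \<longrightarrow>
            card (pq_set p q m) = m ^ 2 \<and>
            neg_inertia (lcm_matrix (pq_set p q m)) = 2 * m - 2 \<and>
            pos_inertia (lcm_matrix (pq_set p q m)) = (m - 1) ^ 2 + 1"
    using card inertia by auto
  have "real (pos_inertia (lcm_matrix (pq_set p q m))) / real (card (pq_set p q m))
      = ((real m - 1) ^ 2 + 1) / real m ^ 2" if "m > 0" for m
    using card[OF that] inertia(1)[OF that] that by (simp add: of_nat_diff)
  hence "\<forall>\<^sub>F m in sequentially. ((real m - 1) ^ 2 + 1) / real m ^ 2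
      = real (pos_inertia (lcm_matrix (pq_set p q m))) / real (card (pq_set p q m))"
    by (intro eventually_mono[OF eventually_gt_at_top[of 0]]) simp
  moreover have "(\<lambda>m::nat. ((real m - 1) ^ 2 + 1) / real m ^ 2) \<longlonglongrightarrow> 1"
    by real_asymp
  ultimately show "(\<lambda>m. real (pos_inertia (lcm_matrix (pq_set p q m))) / real (card (pq_set p q m))) \<longlonglongrightarrow> 1"
    by (rule Lim_transform_eventually[rotated])
qed

end
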